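(* Let $f_{r,k}(x)=x^2\exp(r-x)+k$. For every $k\in[0,2)$ there exists an interval $[r_1,r_2]$ of positive $r$-values such that for every $r\in[r_1,r_2]$ the map $f_{r,k}$ has an attracting fixed point $x_f>2$. *)

theory Defs
  imports "HOL-Analysis.Analysis"
begin

definition f :: "real \<Rightarrow> real \<Rightarrow> real \<Rightarrow> real" where
  "f r k x = x^2 * exp (r - x) + k"

definition attracting_fixed_point :: "(real \<Rightarrow> real) \<Rightarrow> real \<Rightarrow> bool" where
  "attracting_fixed_point g x \<longleftrightarrow> g x = x \<and> g differentiable (at x) \<and> \<bar>deriv g x\<bar> < 1"

end

theory Submission
  imports Defs
begin

text \<open>
  For x > k the map f r k fixes x exactly when r = x + ln ((x - k) / x^2).  At such a fixed
  point x f'(x) = (2 - x)(x - k), and for 2 < x < 3 we have (x - 2)(x - k) < x - k \<le> x, so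
  the fixed point is attracting.  The fixing parameter r(x) is continuous with r(2) < r(3)
  and r(3) > 0 (both only need e \<ge> 9/4), so by the intermediate value theorem every r in a
  closed interval inside (max r(2) 0, r(3)) equals r(x) for some x in (2, 3).
\<close>

lemma f_has_real_derivative:
  "(f r k has_real_derivative (2 * x - x^2) * exp (r - x)) (at x)"
  unfolding f_def [abs_def]
  by (auto intro!: derivative_eq_intros simp: algebra_simps power2_eq_square)

lemma deriv_f_at_fixed_point:
  assumes "f r k x = x"
  shows "x * deriv (f r k) x = (2 - x) * (x - k)"
proof -
  have "x^2 * exp (r - x) = x - k"
    using assms by (simp add: f_def)
  moreover have "x * ((2 * x - x^2) * exp (r - x)) = (2 - x) * (x^2 * exp (r - x))"
    by (simp add: algebra_simps power2_eq_square)
  ultimately show ?thesis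
    using DERIV_imp_deriv [OF f_has_real_derivative] by simp
qed

lemma attracting_fixed_point_f:
  assumes fixed: "f r k x = x" and "0 \<le> k" "2 < x" "x < 3"
  shows "attracting_fixed_point (f r k) x"
proof -
  have "x - k = x^2 * exp (r - x)"
    using fixed by (simp add: f_def)
  then have "0 < x - k"
    using \<open>2 < x\<close> by simp
  then have "\<bar>x * deriv (f r k) x\<bar> = (x - 2) * (x - k)"
    using deriv_f_at_fixed_point [OF fixed] \<open>2 < x\<close> by (simp add: abs_mult)
  also have "\<dots> < 1 * (x - k)"
    using \<open>0 < x - k\<close> \<open>x < 3\<close> by (intro mult_strict_right_mono) auto
  also have "\<dots> \<le> x * 1"
    using \<open>0 \<le> k\<close> by simp
  finally have "\<bar>deriv (f r k) x\<bar> < 1"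
    using \<open>2 < x\<close> by (simp add: abs_mult)
  with fixed show ?thesis
    unfolding attracting_fixed_point_def
    using f_has_real_derivative real_differentiable_def by blast
qed

definition fixing_parameter :: "real \<Rightarrow> real \<Rightarrow> real" where
  "fixing_parameter k x = x + ln ((x - k) / x^2)"

lemma f_fixing_parameter:
  assumes "k < x" "x \<noteq> 0"
  shows "f (fixing_parameter k x) k x = x"
proof -
  have "exp (fixing_parameter k x - x) = (x - k) / x^2"
    using assms by (simp add: fixing_parameter_def)
  then show ?thesis
    using assms by (simp add: f_def)
qed

lemma continuous_on_fixing_parameter:
  assumes "k < a" "0 < a"
  shows "continuous_on {a..b} (fixing_parameter k)"
  unfolding fixing_parameter_def [abs_def]
  using assms by (intro continuous_intros) auto

lemma fixing_parameter_intermediate_value: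
  assumes "k < a" "0 < a" "a \<le> b"
    and "fixing_parameter k a \<le> r" "r \<le> fixing_parameter k b"
  shows "\<exists>x\<in>{a..b}. fixing_parameter k x = r"
  using IVT' [of "fixing_parameter k" a r b] continuous_on_fixing_parameter assms by auto

lemma nine_quarters_le_exp_one: "9/4 \<le> (exp 1 :: real)"
  using exp_1_gt_powr [of 2] by (simp add: powr_numeral power_divide)

lemma fixing_parameter_2_less_3:
  assumes "k < 2"
  shows "fixing_parameter k 2 < fixing_parameter k 3"
proof -
  have "(2 - k) / 4 < (3 - k) / 9 * (9/4)"
    by simp
  also have "\<dots> \<le> (3 - k) / 9 * exp 1"
    using nine_quarters_le_exp_one assms by (intro mult_left_mono) auto
  finally have "ln ((2 - k) / 4) < ln ((3 - k) / 9 * exp 1)"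
    using assms by simp
  also have "\<dots> = ln ((3 - k) / 9) + 1"
    using assms ln_mult [of "(3 - k) / 9" "exp 1"] by simp
  finally show ?thesis
    by (simp add: fixing_parameter_def)
qed

lemma fixing_parameter_3_pos:
  assumes "k < 2"
  shows "0 < fixing_parameter k 3"
proof -
  have "(9/4 :: real)^3 \<le> exp 1 ^ 3"
    using nine_quarters_le_exp_one by (intro power_mono) auto
  then have "9 < exp (3 :: real)"
    by (simp add: power_divide flip: exp_of_nat_mult)
  then have "exp (-3) < (1 / 9 :: real)"
    by (simp add: exp_minus field_simps)
  also have "\<dots> < (3 - k) / 9"
    using assms by simp
  finally have "exp (-3) < (3 - k) / 9" .
  then have "ln (exp (-3)) < ln ((3 - k) / 9)"
    by (rule ln_strict_mono) simp
  then show ?thesis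
    by (simp add: fixing_parameter_def)
qed

theorem corollary3p5:
  fixes k :: real
  assumes "0 \<le> k" and "k < 2"
  shows "\<exists>r1 r2. 0 < r1 \<and> r1 < r2 \<and>
           (\<forall>r\<in>{r1..r2}. \<exists>xf. xf > 2 \<and> attracting_fixed_point (f r k) xf)"
proof -
  let ?r = "fixing_parameter k"
  have "max (?r 2) 0 < ?r 3"
    using fixing_parameter_2_less_3 fixing_parameter_3_pos \<open>k < 2\<close> by simp
  then obtain r1 r2 where r1: "max (?r 2) 0 < r1" and "r1 < r2" and r2: "r2 < ?r 3"
    by (meson dense)
  have "\<exists>xf. xf > 2 \<and> attracting_fixed_point (f r k) xf" if r: "r \<in> {r1..r2}" for r
  proof -
    obtain x where x: "x \<in> {2..3}" "?r x = r"
      using fixing_parameter_intermediate_value [of k 2 3 r] r r1 r2 \<open>k < 2\<close> by auto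
    then have "2 < x" "x < 3"
      using r r1 r2 by (auto simp: order.order_iff_strict)
    moreover have "f r k x = x"
      using f_fixing_parameter [of k x] x \<open>k < 2\<close> by auto
    ultimately show ?thesis
      using attracting_fixed_point_f \<open>0 \<le> k\<close> by blast
  qed
  with r1 \<open>r1 < r2\<close> show ?thesis
    by force
qed

end
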